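(* Let $r\ge 2$ be an integer, let $\varphi$ be an instance of 2-Clause 3-SAT, and let $G(\varphi)$ be the graph constructed from $\varphi$ and $r$ as described in the context. If $\mathrm{col}_r(G(\varphi)) \leq 6$, then $\varphi$ has a satisfying assignment.
   Context: 2-Clause 3-SAT: given a CNF formula $\varphi$ with clauses $c_1,\dots,c_m$ over variables $x_1,\dots,x_n$ in which each clause contains at most 3 literals and each literal ($x_j$ or $\overline{x}_j$) appears in exactly 2 clauses, decide whether $\varphi$ is satisfiable. It is assumed throughout that no variable appears twice in a single clause and there are no single-literal clauses (so each clause has 2 or 3 literals). An $\ell$-subdivided edge between $a$ and $b$ is an induced path with $\ell$ internal vertices (subdivision vertices) joining $a$ and $b$, whose internal vertices have no other neighbors. Construction of $G(\varphi)$: for each clause $c_i$ create a vertex $u_i$. For each variable $x_j$ create two vertices $v_j,v'_j$ (for literals $x_j$, $\overline{x}_j$) joined by an edge. For each clause $c_i$ containing literal $x_j$ (resp. $\overline{x}_j$), join $u_i$ and $v_j$ (resp. $v'_j$) by an $(r-1)$-subdivided edge. Add a 7-clique on new vertices $w_1,\dots,w_7$. For each clause $c_i$ add edges from $u_i$ to $w_1,\dots,w_4$, and if $c_i$ has only 2 literals also an edge from $u_i$ to $w_5$. For each variable $x_j$ add edges from $v_j$ to $w_2,w_3,w_4$ and from $v'_j$ to $w_5,w_6,w_7$. Coloring numbers: for a graph $G=(V,E)$ and a total order $\sigma$ of $V$, a vertex $v\neq u$ is $r$-reachable from $u$ if $u<_\sigma v$ and there is a $u$–$v$ path of length at most $r$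 all of whose vertices other than $u,v$ precede $u$ in $\sigma$; $\mathrm{reach}_r(u,G_\sigma)$ is the set of such $v$, and $\mathrm{col}_r(G)=\min_\sigma\max_u|\mathrm{reach}_r(u,G_\sigma)|$ over all total orders $\sigma$ of $V$. *)

theory Defs
  imports Main
begin

text \<open>A literal is a pair (j, b):
  (j, True) is the literal x_j, (j, False) is its negation.\<close>

type_synonym lit = "nat \<times> bool"
type_synonym clause = "lit set"

definition two_clause_3sat :: "nat \<Rightarrow> clause list \<Rightarrow> bool" where
  "two_clause_3sat n cs \<longleftrightarrow>
     (\<forall>c \<in> set cs. finite c \<and> 2 \<le> card c \<and> card c \<le> 3) \<and>
     (\<forall>c \<in> set cs. \<forall>j b b'. (j, b) \<in> c \<longrightarrow> (j, b') \<in> c \<longrightarrow> b = b') \<and>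
     (\<forall>c \<in> set cs. \<forall>(j, b) \<in> c. j < n) \<and>
     (\<forall>j < n. \<forall>b. card {i. i < length cs \<and> (j, b) \<in> cs ! i} = 2)"

definition satisfies :: "(nat \<Rightarrow> bool) \<Rightarrow> clause list \<Rightarrow> bool" where
  "satisfies a cs \<longleftrightarrow> (\<forall>c \<in> set cs. \<exists>(j, b) \<in> c. a j = b)"

definition satisfiable :: "clause list \<Rightarrow> bool" where
  "satisfiable cs \<longleftrightarrow> (\<exists>a. satisfies a cs)"

text \<open>U i = u_i, V j = v_j, V' j = v'_j, W k = w_k (k = 1..7),
  S i j b k = k-th subdivision vertex (1 \<le> k \<le> r-1) of the subdivided edge
  between u_i and the vertex of literal (j,b).\<close>

datatype vtx = U nat | V nat | V' nat | W nat | S nat nat bool nat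

definition litv :: "nat \<Rightarrow> bool \<Rightarrow> vtx" where
  "litv j b = (if b then V j else V' j)"

text \<open>k-th vertex (0 \<le> k \<le> r) on the (r-1)-subdivided edge from u_i to litv j b.\<close>
definition pathv :: "nat \<Rightarrow> nat \<Rightarrow> nat \<Rightarrow> bool \<Rightarrow> nat \<Rightarrow> vtx" where
  "pathv r i j b k = (if k = 0 then U i else if k = r then litv j b else S i j b k)"

definition Gverts :: "nat \<Rightarrow> nat \<Rightarrow> clause list \<Rightarrow> vtx set" where
  "Gverts r n cs =
     {U i | i. i < length cs} \<union> {V j | j. j < n} \<union> {V' j | j. j < n} \<union>
     {W k | k. 1 \<le> k \<and> k \<le> 7} \<union>
     {S i j b k | i j b k. i < length cs \<and> (j, b) \<in> cs ! i \<and> 1 \<le> k \<and> k \<le> r - 1}"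

definition Gbase :: "nat \<Rightarrow> nat \<Rightarrow> clause list \<Rightarrow> (vtx \<times> vtx) set" where
  "Gbase r n cs =
     {(V j, V' j) | j. j < n} \<union>
     {(pathv r i j b k, pathv r i j b (Suc k)) | i j b k.
        i < length cs \<and> (j, b) \<in> cs ! i \<and> k < r} \<union>
     {(W a, W a') | a a'. 1 \<le> a \<and> a \<le> 7 \<and> 1 \<le> a' \<and> a' \<le> 7 \<and> a \<noteq> a'} \<union>
     {(U i, W a) | i a. i < length cs \<and> 1 \<le> a \<and> a \<le> 4} \<union>
     {(U i, W 5) | i. i < length cs \<and> card (cs ! i) = 2} \<union>
     {(V j, W a) | j a. j < n \<and> 2 \<le> a \<and> a \<le> 4} \<union>
     {(V' j, W a) | j a. j < n \<and> 5 \<le> a \<and> a \<le> 7}"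

definition Gedges :: "nat \<Rightarrow> nat \<Rightarrow> clause list \<Rightarrow> (vtx \<times> vtx) set" where
  "Gedges r n cs = Gbase r n cs \<union> (Gbase r n cs)\<inverse>"

definition is_order :: "'a set \<Rightarrow> 'a list \<Rightarrow> bool" where
  "is_order VV \<sigma> \<longleftrightarrow> distinct \<sigma> \<and> set \<sigma> = VV"

definition before :: "'a list \<Rightarrow> 'a \<Rightarrow> 'a \<Rightarrow> bool" where
  "before \<sigma> x y \<longleftrightarrow> (\<exists>i j. i < j \<and> j < length \<sigma> \<and> \<sigma> ! i = x \<and> \<sigma> ! j = y)"

definition is_path :: "('a \<times> 'a) set \<Rightarrow> 'a list \<Rightarrow> bool" where
  "is_path E p \<longleftrightarrow> p \<noteq> [] \<and> distinct p \<and>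
     (\<forall>i. Suc i < length p \<longrightarrow> (p ! i, p ! Suc i) \<in> E)"

definition reach :: "nat \<Rightarrow> ('a \<times> 'a) set \<Rightarrow> 'a list \<Rightarrow> 'a \<Rightarrow> 'a set" where
  "reach r E \<sigma> u = {v. v \<noteq> u \<and> before \<sigma> u v \<and>
     (\<exists>p. is_path E p \<and> hd p = u \<and> last p = v \<and> length p - 1 \<le> r \<and>
          (\<forall>x \<in> set (butlast (tl p)). before \<sigma> x u))}"

definition col :: "nat \<Rightarrow> 'a set \<Rightarrow> ('a \<times> 'a) set \<Rightarrow> nat" where
  "col r VV E = Min ((\<lambda>\<sigma>. Max ((\<lambda>u. card (reach r E \<sigma> u)) ` VV)) ` {\<sigma>. is_order VV \<sigma>})"

end

(*
  Take an order in which every vertex r-reaches at most 6 others and set x_j true iff v_j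
  precedes v'_j.  The first vertex w_k of the 7-clique reaches the 6 other w's, hence nothing
  else, so every vertex joined to w_k by a short path of non-w vertices precedes w_k.
  Now consider a literal vertex that comes after its complement (a false literal) and before
  w_2..w_7: it reaches these six w's (directly or through its complement), so it cannot also
  reach a subdivision vertex of its path to u_i, i.e. it comes after u_i.  On the other hand,
  if u_i precedes all w's, it reaches its 4 (or 5) w-neighbours, so some literal vertex of c_i
  precedes u_i, for otherwise u_i would also reach a vertex on each of its 3 (or 2) paths.
  For a clause with only false literals, the first fact puts u_i before all w's and the two
  facts then contradict each other.
*)

theory Submission
  imports Defs
begin

lemma before_Cons: "before (x # s) a b \<longleftrightarrow> (a = x \<and> b \<in> set s) \<or> before s a b"
proof
  assume "before (x # s) a b"
  then obtain i j where ij: "i < j" "j < Suc (length s)" "(x # s) ! i = a" "(x # s) ! j = b"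
    unfolding before_def by auto
  show "(a = x \<and> b \<in> set s) \<or> before s a b"
  proof (cases i)
    case 0
    then show ?thesis using ij by (cases j) auto
  next
    case (Suc i')
    with ij obtain j' where "j = Suc j'" by (cases j) auto
    then show ?thesis using ij Suc unfolding before_def by auto
  qed
next
  assume "(a = x \<and> b \<in> set s) \<or> before s a b"
  then show "before (x # s) a b"
  proof
    assume "a = x \<and> b \<in> set s"
    then obtain j where "j < length s" "s ! j = b" by (auto simp: in_set_conv_nth)
    then show ?thesis unfolding before_def using \<open>a = x \<and> b \<in> set s\<close>
      by (intro exI[of _ 0] exI[of _ "Suc j"]) auto
  next
    assume "before s a b"
    then show ?thesis unfolding before_def by (metis Suc_mono length_Cons nth_Cons_Suc)
  qed
qed

lemma before_in_set: "before s x y \<Longrightarrow> x \<in> set s \<and> y \<in> set s"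
  unfolding before_def by auto

lemma before_neq: "distinct s \<Longrightarrow> before s x y \<Longrightarrow> x \<noteq> y"
  by (induction s) (auto simp: before_Cons dest: before_in_set)

lemma before_trans: "distinct s \<Longrightarrow> before s x y \<Longrightarrow> before s y z \<Longrightarrow> before s x z"
  by (induction s) (auto simp: before_Cons dest: before_in_set)

lemma before_asym: "distinct s \<Longrightarrow> before s x y \<Longrightarrow> \<not> before s y x"
  using before_trans before_neq by metis

lemma before_total: "x \<in> set s \<Longrightarrow> y \<in> set s \<Longrightarrow> x \<noteq> y \<Longrightarrow> before s x y \<or> before s y x"
  by (induction s) (auto simp: before_Cons)

lemma ex_first_in_order:
  assumes "A \<subseteq> set s" "A \<noteq> {}"
  shows "\<exists>a \<in> A. \<forall>b \<in> A - {a}. before s a b"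
  using assms
proof (induction s arbitrary: A)
  case (Cons x s)
  show ?case
  proof (cases "x \<in> A")
    case True
    then show ?thesis using Cons.prems by (auto simp: before_Cons)
  next
    case False
    then have "A \<subseteq> set s" using Cons.prems by auto
    then obtain a where "a \<in> A" "\<forall>b \<in> A - {a}. before s a b"
      using Cons.IH Cons.prems(2) by blast
    then show ?thesis by (auto simp: before_Cons)
  qed
qed simp

section \<open>Paths and r-reachability\<close>

lemma is_path_Cons_Cons:
  "is_path E (x # y # p) \<longleftrightarrow> (x, y) \<in> E \<and> x \<notin> set (y # p) \<and> is_path E (y # p)"
  unfolding is_path_def by (auto simp: nth_Cons split: nat.splits)

lemma is_path_singleton: "is_path E [x]"
  unfolding is_path_def by simp

lemma is_path_prefix:
  assumes "is_path E (xs @ ys)" "xs \<noteq> []"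
  shows "is_path E xs"
  unfolding is_path_def
proof (intro conjI allI impI)
  fix i assume "Suc i < length xs"
  then show "(xs ! i, xs ! Suc i) \<in> E"
    using assms(1) unfolding is_path_def by (auto simp: nth_append dest!: spec[of _ i])
qed (use assms in \<open>auto simp: is_path_def\<close>)

lemma is_path_rev:
  assumes "sym E" and p: "is_path E p"
  shows "is_path E (rev p)"
  unfolding is_path_def
proof (intro conjI allI impI)
  show "rev p \<noteq> []" "distinct (rev p)" using p unfolding is_path_def by auto
  fix i assume i: "Suc i < length (rev p)"
  define k where "k = length p - Suc (Suc i)"
  have "(p ! k, p ! Suc k) \<in> E" using p i unfolding is_path_def k_def by auto
  moreover have "rev p ! i = p ! Suc k" "rev p ! Suc i = p ! k"
    using i by (auto simp: rev_nth k_def Suc_diff_Suc)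
  ultimately show "(rev p ! i, rev p ! Suc i) \<in> E" using \<open>sym E\<close> by (auto dest: symD)
qed

text \<open>The witness is the first vertex of the path that comes after u; the vertices of the
  path before it come before u.\<close>
lemma reach_along_path:
  assumes s: "distinct s" and p: "is_path E p" "hd p = u" "length p \<le> Suc r" "set p \<subseteq> set s"
    and after: "before s u (last p)"
  shows "\<exists>v \<in> set (tl p). v \<in> reach r E s u"
proof -
  obtain q where pq: "p = u # q" using p(1,2) unfolding is_path_def by (cases p) auto
  define early where "early x \<longleftrightarrow> \<not> before s u x" for x
  have "last p \<noteq> u" using before_neq[OF s after] by simp
  then have "last p \<in> set q" "\<not> early (last p)" using pq after by (auto simp: early_def)
  then obtain v q' where v: "dropWhile early q = v # q'"
    by (cases "dropWhile early q") auto
  define q0 where "q0 = takeWhile early q"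
  have split: "p = (u # q0 @ [v]) @ q'" using pq v takeWhile_dropWhile_id[of early q]
    by (simp add: q0_def)
  have "v \<in> set q" "\<not> early v"
    using v set_dropWhileD[of v early q] hd_dropWhile[of early q] by auto
  have path: "is_path E (u # q0 @ [v])" using is_path_prefix[of E _ q'] p(1) split by simp
  have u_in: "u \<in> set s" using before_in_set[OF after] by simp
  have interior: "before s x u" if "x \<in> set q0" for x
  proof -
    have "early x" using that set_takeWhileD unfolding q0_def by fastforce
    moreover have "x \<noteq> u" "x \<in> set s"
      using that p(1,4) split unfolding is_path_def by auto
    ultimately show ?thesis using before_total[OF _ u_in] unfolding early_def by blast
  qed
  have "length q0 < r" using p(3) split by simp
  moreover have "before s u v" using \<open>\<not> early v\<close> unfolding early_def by simp
  moreover have "v \<noteq> u" using before_neq[OF s] calculation by metis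
  ultimately have "v \<in> reach r E s u"
    unfolding reach_def using path interior
    by (intro CollectI conjI exI[of _ "u # q0 @ [v]"]) simp_all
  then show ?thesis using \<open>v \<in> set q\<close> pq by auto
qed

lemma reach_if_edge:
  assumes "distinct s" "1 \<le> r" "(x, y) \<in> E" "before s x y"
  shows "y \<in> reach r E s x"
proof -
  have "x \<noteq> y" using before_neq assms(1,4) by metis
  then have "is_path E [x, y]" using assms(3) by (simp add: is_path_Cons_Cons is_path_singleton)
  then show ?thesis unfolding reach_def using assms(2,4) \<open>x \<noteq> y\<close>
    by (intro CollectI conjI exI[of _ "[x, y]"]) simp_all
qed

lemma reach_via_earlier:
  assumes "distinct s" "2 \<le> r" "(x, z) \<in> E" "(z, y) \<in> E" "before s z x" "before s x y"
  shows "y \<in> reach r E s x"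
proof -
  have "before s z y" using before_trans[OF assms(1,5,6)] .
  then have "z \<noteq> x" "z \<noteq> y" "x \<noteq> y" using before_neq[OF assms(1)] assms(5,6) by blast+
  then have "is_path E [x, z, y]" using assms(3,4) by (simp add: is_path_Cons_Cons is_path_singleton)
  then show ?thesis unfolding reach_def using assms(2,5,6) \<open>x \<noteq> y\<close>
    by (intro CollectI conjI exI[of _ "[x, z, y]"]) simp_all
qed

lemma finite_reach: "finite (reach r E s u)"
  by (rule finite_subset[of _ "set s"]) (auto simp: reach_def dest: before_in_set)

lemma ex_order_if_col_le:
  assumes "finite VV" "col r VV E \<le> k"
  shows "\<exists>\<sigma>. is_order VV \<sigma> \<and> (\<forall>u \<in> VV. card (reach r E \<sigma> u) \<le> k)"
proof -
  define width where "width \<sigma> = Max ((\<lambda>u. card (reach r E \<sigma> u)) ` VV)" for \<sigma>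
  have "{\<sigma>. is_order VV \<sigma>} \<subseteq> {\<sigma>. set \<sigma> \<subseteq> VV \<and> length \<sigma> \<le> card VV}"
    unfolding is_order_def using distinct_card by fastforce
  then have "finite {\<sigma>. is_order VV \<sigma>}"
    using finite_lists_length_le[OF assms(1)] finite_subset by blast
  moreover have "{\<sigma>. is_order VV \<sigma>} \<noteq> {}"
    using finite_distinct_list[OF assms(1)] unfolding is_order_def by auto
  ultimately have "col r VV E \<in> width ` {\<sigma>. is_order VV \<sigma>}"
    unfolding col_def width_def by (intro Min_in) auto
  then obtain \<sigma> where "is_order VV \<sigma>" "width \<sigma> \<le> k" using assms(2) by auto
  moreover have "card (reach r E \<sigma> u) \<le> width \<sigma>" if "u \<in> VV" for u
    unfolding width_def using assms(1) that by (intro Max_ge) auto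
  ultimately show ?thesis by (meson order_trans)
qed

section \<open>The graph G(phi)\<close>

definition clause_path :: "nat \<Rightarrow> nat \<Rightarrow> nat \<Rightarrow> bool \<Rightarrow> vtx list" where
  "clause_path r i j b = map (pathv r i j b) [0..<Suc r]"

definition lit_W_nbrs :: "bool \<Rightarrow> nat set" where
  "lit_W_nbrs b = (if b then {2..4} else {5..7})"

lemma litv_neq_W [simp]: "litv j b \<noteq> W a" "W a \<noteq> litv j b"
  by (simp_all add: litv_def)

lemma litv_neq_U [simp]: "litv j b \<noteq> U i"
  by (simp add: litv_def)

lemma litv_eq_iff [simp]: "litv j b = litv j' b' \<longleftrightarrow> j = j' \<and> b = b'"
  by (simp add: litv_def)

lemma pathv_neq_W [simp]: "pathv r i j b k \<noteq> W a" "W a \<noteq> pathv r i j b k"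
  by (simp_all add: pathv_def)

lemma pathv_inj:
  "1 \<le> r \<Longrightarrow> k \<le> r \<Longrightarrow> k' \<le> r \<Longrightarrow> pathv r i j b k = pathv r i j b k' \<Longrightarrow> k = k'"
  by (auto simp: pathv_def litv_def split: if_splits)

lemma pathv_eq_imp_lit_eq:
  "k \<in> {1..r} \<Longrightarrow> k' \<in> {1..r} \<Longrightarrow> pathv r i j b k = pathv r i j' b' k' \<Longrightarrow> (j, b) = (j', b')"
  by (auto simp: pathv_def litv_def split: if_splits)

lemma length_clause_path: "length (clause_path r i j b) = Suc r"
  by (simp add: clause_path_def)

lemma hd_clause_path: "hd (clause_path r i j b) = U i"
  by (simp add: clause_path_def pathv_def upt_conv_Cons del: upt_Suc)

lemma last_clause_path: "1 \<le> r \<Longrightarrow> last (clause_path r i j b) = litv j b"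
  by (simp add: clause_path_def pathv_def)

lemma set_clause_path: "set (clause_path r i j b) = pathv r i j b ` {0..r}"
  unfolding clause_path_def set_map set_upt atLeastLessThanSuc_atLeastAtMost ..

lemma set_tl_clause_path: "set (tl (clause_path r i j b)) = pathv r i j b ` {1..r}"
  by (auto simp: clause_path_def upt_conv_Cons simp del: upt_Suc)

lemma pathv_edge_in_Gedges:
  assumes "k < r" "i < length cs" "(j, b) \<in> cs ! i"
  shows "(pathv r i j b k, pathv r i j b (Suc k)) \<in> Gedges r n cs"
proof -
  have "(pathv r i j b k, pathv r i j b (Suc k)) \<in> {(pathv r i j b k, pathv r i j b (Suc k)) | i j b k.
        i < length cs \<and> (j, b) \<in> cs ! i \<and> k < r}" using assms by blast
  then show ?thesis unfolding Gedges_def Gbase_def Un_iff by blast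
qed

lemma is_path_clause_path:
  assumes "1 \<le> r" "i < length cs" "(j, b) \<in> cs ! i"
  shows "is_path (Gedges r n cs) (clause_path r i j b)"
  unfolding is_path_def
proof (intro conjI allI impI)
  show "clause_path r i j b \<noteq> []" by (simp add: clause_path_def)
  show "distinct (clause_path r i j b)"
    unfolding clause_path_def distinct_map
    by (auto simp del: upt_Suc intro!: inj_onI pathv_inj[OF assms(1)])
  fix k assume "Suc k < length (clause_path r i j b)"
  then have "k < r" by (simp add: length_clause_path)
  then show "(clause_path r i j b ! k, clause_path r i j b ! Suc k) \<in> Gedges r n cs"
    using pathv_edge_in_Gedges[OF _ assms(2,3)] by (simp add: clause_path_def del: upt_Suc)
qed

lemma sym_Gedges: "sym (Gedges r n cs)"
  unfolding Gedges_def by (auto intro: symI)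

lemma UW_in_Gedges: "i < length cs \<Longrightarrow> a \<in> {1..4} \<Longrightarrow> (U i, W a) \<in> Gedges r n cs"
  unfolding Gedges_def Gbase_def by auto

lemma UW5_in_Gedges: "i < length cs \<Longrightarrow> card (cs ! i) = 2 \<Longrightarrow> (U i, W 5) \<in> Gedges r n cs"
  unfolding Gedges_def Gbase_def by auto

lemma WW_in_Gedges: "a \<in> {1..7} \<Longrightarrow> a' \<in> {1..7} \<Longrightarrow> a \<noteq> a' \<Longrightarrow> (W a, W a') \<in> Gedges r n cs"
  unfolding Gedges_def Gbase_def by auto

lemma litW_in_Gedges: "j < n \<Longrightarrow> a \<in> lit_W_nbrs b \<Longrightarrow> (litv j b, W a) \<in> Gedges r n cs"
  unfolding Gedges_def Gbase_def lit_W_nbrs_def litv_def by (cases b) auto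

lemma W_litv_in_Gedges: "j < n \<Longrightarrow> a \<in> lit_W_nbrs b \<Longrightarrow> (W a, litv j b) \<in> Gedges r n cs"
  using litW_in_Gedges sym_Gedges by (metis symD)

lemma lit_lit_in_Gedges: "j < n \<Longrightarrow> (litv j b, litv j (\<not> b)) \<in> Gedges r n cs"
  unfolding Gedges_def Gbase_def litv_def by (cases b) auto

lemma U_in_Gverts: "i < length cs \<Longrightarrow> U i \<in> Gverts r n cs"
  by (simp add: Gverts_def)

lemma W_in_Gverts: "a \<in> {1..7} \<Longrightarrow> W a \<in> Gverts r n cs"
  by (simp add: Gverts_def)

lemma litv_in_Gverts: "j < n \<Longrightarrow> litv j b \<in> Gverts r n cs"
  by (simp add: Gverts_def litv_def)

lemma set_clause_path_subset:
  assumes "i < length cs" "(j, b) \<in> cs ! i" "j < n"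
  shows "set (clause_path r i j b) \<subseteq> Gverts r n cs"
proof
  fix x assume "x \<in> set (clause_path r i j b)"
  then obtain k where k: "k \<le> r" "x = pathv r i j b k" by (auto simp: set_clause_path)
  consider "k = 0" | "k = r" | "0 < k" "k < r" using k(1) by linarith
  then show "x \<in> Gverts r n cs"
  proof cases
    case 3
    then show ?thesis using k assms unfolding Gverts_def pathv_def by auto
  qed (use k assms U_in_Gverts litv_in_Gverts in \<open>auto simp: pathv_def\<close>)
qed

lemma two_clause_3sat_var_less:
  "two_clause_3sat n cs \<Longrightarrow> i < length cs \<Longrightarrow> (j, b) \<in> cs ! i \<Longrightarrow> j < n"
  unfolding two_clause_3sat_def by (metis (mono_tags, lifting) case_prodD nth_mem)

lemma two_clause_3sat_card:
  "two_clause_3sat n cs \<Longrightarrow> i < length cs \<Longrightarrow> finite (cs ! i) \<and> 2 \<le> card (cs ! i) \<and> card (cs ! i) \<le> 3"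
  unfolding two_clause_3sat_def by (meson nth_mem)

lemma finite_Gverts:
  assumes "two_clause_3sat n cs"
  shows "finite (Gverts r n cs)"
proof -
  have "{S i j b k | i j b k. i < length cs \<and> (j, b) \<in> cs ! i \<and> 1 \<le> k \<and> k \<le> r - 1}
     \<subseteq> (\<lambda>(i, j, b, k). S i j b k) ` ({..<length cs} \<times> {..<n} \<times> UNIV \<times> {..r})"
  proof clarify
    fix i j b k assume "i < length cs" "(j, b) \<in> cs ! i" "k \<le> r - 1"
    moreover have "j < n" using two_clause_3sat_var_less[OF assms] calculation by blast
    ultimately show "S i j b k \<in> (\<lambda>(i, j, b, k). S i j b k) ` ({..<length cs} \<times> {..<n} \<times> UNIV \<times> {..r})"
      by (intro rev_image_eqI[of "(i, j, b, k)"]) auto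
  qed
  then have "finite {S i j b k | i j b k. i < length cs \<and> (j, b) \<in> cs ! i \<and> 1 \<le> k \<and> k \<le> r - 1}"
    by (rule finite_subset) simp
  then show ?thesis unfolding Gverts_def by auto
qed

section \<open>Orders in which every vertex reaches at most six others\<close>

locale small_reach_order =
  fixes r n :: nat and cs :: "clause list" and s :: "vtx list"
  assumes r_ge_2: "2 \<le> r"
    and formula: "two_clause_3sat n cs"
    and order: "is_order (Gverts r n cs) s"
    and card_reach_le_6: "\<forall>u \<in> Gverts r n cs. card (reach r (Gedges r n cs) s u) \<le> 6"
begin

abbreviation reached :: "vtx \<Rightarrow> vtx set" where
  "reached u \<equiv> reach r (Gedges r n cs) s u"

definition first_W :: "nat \<Rightarrow> bool" where
  "first_W k \<longleftrightarrow> k \<in> {1..7} \<and> (\<forall>a \<in> {1..7} - {k}. before s (W k) (W a))"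

lemma r_ge_1: "1 \<le> r"
  using r_ge_2 by simp

lemma distinct_order: "distinct s"
  using order unfolding is_order_def by simp

lemma set_order: "set s = Gverts r n cs"
  using order unfolding is_order_def by simp

lemma var_less: "i < length cs \<Longrightarrow> (j, b) \<in> cs ! i \<Longrightarrow> j < n"
  using two_clause_3sat_var_less[OF formula] .

lemma reached_subset_range_W:
  assumes x: "x \<in> Gverts r n cs" and A: "W ` A \<subseteq> reached x" "6 \<le> card A"
  shows "reached x \<subseteq> range W"
proof
  fix v assume v: "v \<in> reached x"
  show "v \<in> range W"
  proof (rule ccontr)
    assume "v \<notin> range W"
    then have "v \<notin> W ` A" by blast
    moreover have "finite (W ` A)" using finite_subset[OF A(1) finite_reach] .
    moreover have "card (W ` A) = card A" by (rule card_image) (simp add: inj_on_def)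
    ultimately have "Suc (card A) = card (insert v (W ` A))" by simp
    also have "card (insert v (W ` A)) \<le> card (reached x)"
      using A(1) v by (intro card_mono finite_reach) auto
    finally show False using card_reach_le_6 x A(2) by fastforce
  qed
qed

lemma ex_first_W: "\<exists>k. first_W k"
proof -
  have "W ` {1..7} \<subseteq> set s" using set_order W_in_Gverts by blast
  then obtain w where "w \<in> W ` {1..7}" and first: "\<forall>w' \<in> W ` {1..7} - {w}. before s w w'"
    using ex_first_in_order[of "W ` {1..7}" s] by auto
  then obtain k where "k \<in> {1..7}" "w = W k" by blast
  then have "first_W k" unfolding first_W_def using first by auto
  then show ?thesis ..
qed

lemma before_first_W_imp_before_W:
  assumes "first_W k" "before s x (W k)" "a \<in> {1..7}"
  shows "before s x (W a)"
proof (cases "a = k")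
  case False
  then have "before s (W k) (W a)" using assms(1,3) unfolding first_W_def by blast
  then show ?thesis using before_trans[OF distinct_order assms(2)] by blast
qed (use assms(2) in simp)

lemma reached_first_W:
  assumes "first_W k"
  shows "reached (W k) \<subseteq> range W"
proof (rule reached_subset_range_W)
  have k: "k \<in> {1..7}" "\<forall>a \<in> {1..7} - {k}. before s (W k) (W a)"
    using assms unfolding first_W_def by auto
  then show "W k \<in> Gverts r n cs" using W_in_Gverts by blast
  show "W ` ({1..7} - {k}) \<subseteq> reached (W k)"
    using k by (auto intro!: reach_if_edge[OF distinct_order r_ge_1] WW_in_Gedges)
  show "6 \<le> card ({1..7} - {k})" using k by simp
qed

text \<open>Otherwise the first w would reach a non-w vertex of the path.\<close>
lemma before_first_W:
  assumes k: "first_W k" and p: "is_path (Gedges r n cs) p" "hd p = W k" "length p \<le> Suc r"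
    "set p \<subseteq> Gverts r n cs" "tl p \<noteq> []" "set (tl p) \<inter> range W = {}"
  shows "before s (last p) (W k)"
proof (rule ccontr)
  assume not_before: "\<not> before s (last p) (W k)"
  have "last p \<in> set (tl p)" using p(5) by (simp add: last_tl[symmetric])
  moreover have "last p \<in> set p" using p(5) by (cases p) auto
  ultimately have "last p \<noteq> W k" "last p \<in> set s" using p set_order by auto
  moreover have "W k \<in> set s" using k set_order W_in_Gverts unfolding first_W_def by blast
  ultimately have "before s (W k) (last p)" using before_total not_before by metis
  then obtain v where "v \<in> set (tl p)" "v \<in> reached (W k)"
    using reach_along_path[OF distinct_order p(1-3)] p(4) set_order by blast
  then show False using reached_first_W[OF k] p(6) by blast
qed

lemma lits_before_first_W:
  assumes k: "first_W k" "k \<in> lit_W_nbrs b0" and j: "j < n"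
  shows "before s (litv j b) (W k)"
proof -
  have in_G: "W k \<in> Gverts r n cs" "litv j b0 \<in> Gverts r n cs" "litv j (\<not> b0) \<in> Gverts r n cs"
    using k(1) j W_in_Gverts litv_in_Gverts unfolding first_W_def by auto
  have e1: "(W k, litv j b0) \<in> Gedges r n cs" using W_litv_in_Gedges[OF j k(2)] .
  have e2: "(litv j b0, litv j (\<not> b0)) \<in> Gedges r n cs" using lit_lit_in_Gedges[OF j] .
  have "before s (last [W k, litv j b0]) (W k)"
    using e1 in_G r_ge_1
    by (intro before_first_W[OF k(1)]) (auto simp: is_path_Cons_Cons is_path_singleton)
  moreover have "before s (last [W k, litv j b0, litv j (\<not> b0)]) (W k)"
    using e1 e2 in_G r_ge_2
    by (intro before_first_W[OF k(1)]) (auto simp: is_path_Cons_Cons is_path_singleton)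
  ultimately show ?thesis by (cases "b = b0") auto
qed

lemma before_false_lit:
  assumes "j < n" "before s (V j) (V' j) \<noteq> b"
  shows "before s (litv j (\<not> b)) (litv j b)"
proof -
  have V: "V j \<in> set s" "V' j \<in> set s"
    using set_order litv_in_Gverts[OF assms(1), of True] litv_in_Gverts[OF assms(1), of False]
    by (simp_all add: litv_def)
  show ?thesis
  proof (cases b)
    case True
    then have "\<not> before s (V j) (V' j)" using assms(2) by simp
    then show ?thesis using before_total[OF V] True by (simp add: litv_def)
  next
    case False
    then show ?thesis using assms(2) by (simp add: litv_def)
  qed
qed

lemma lit_reaches_W:
  assumes j: "j < n" and false: "before s (litv j (\<not> b)) (litv j b)"
    and W: "\<forall>a \<in> {2..7}. before s (litv j b) (W a)"
  shows "W ` {2..7} \<subseteq> reached (litv j b)"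
proof clarify
  fix a :: nat assume a: "a \<in> {2..7}"
  show "W a \<in> reached (litv j b)"
  proof (cases "a \<in> lit_W_nbrs b")
    case True
    then show ?thesis
      using reach_if_edge[OF distinct_order r_ge_1 litW_in_Gedges[OF j True]] W a by blast
  next
    case False
    then have "a \<in> lit_W_nbrs (\<not> b)" using a unfolding lit_W_nbrs_def by auto
    then show ?thesis
      using reach_via_earlier[OF distinct_order r_ge_2 lit_lit_in_Gedges[OF j]
          litW_in_Gedges[OF j] false] W a by blast
  qed
qed

lemma before_total_lit_U:
  assumes "i < length cs" "(j, b) \<in> cs ! i"
  shows "before s (litv j b) (U i) \<or> before s (U i) (litv j b)"
proof -
  have "U i \<in> set s" "litv j b \<in> set s"
    using set_order U_in_Gverts[OF assms(1)] litv_in_Gverts[OF var_less[OF assms]] by auto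
  then show ?thesis using before_total[of "litv j b" s "U i"] by simp
qed

lemma reach_clause_path:
  assumes i: "i < length cs" "(j, b) \<in> cs ! i" and before: "before s (U i) (litv j b)"
  shows "\<exists>k \<in> {1..r}. pathv r i j b k \<in> reached (U i)"
proof -
  have "set (clause_path r i j b) \<subseteq> set s"
    using set_clause_path_subset[OF i var_less[OF i]] set_order by simp
  then show ?thesis
    using reach_along_path[OF distinct_order is_path_clause_path[OF r_ge_1 i]]
      before r_ge_1
    by (simp add: hd_clause_path last_clause_path length_clause_path set_tl_clause_path)
qed

lemma reach_rev_clause_path:
  assumes i: "i < length cs" "(j, b) \<in> cs ! i" and before: "before s (litv j b) (U i)"
  shows "\<exists>v \<in> reached (litv j b). v \<notin> range W"
proof -
  let ?p = "rev (clause_path r i j b)"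
  have "is_path (Gedges r n cs) ?p"
    using is_path_rev[OF sym_Gedges is_path_clause_path[OF r_ge_1 i]] .
  moreover have "hd ?p = litv j b" "last ?p = U i" "length ?p \<le> Suc r"
    using r_ge_1 by (simp_all add: hd_rev last_rev hd_clause_path last_clause_path length_clause_path)
  moreover have "set ?p \<subseteq> set s"
    using set_clause_path_subset[OF i var_less[OF i]] set_order by simp
  ultimately obtain v where "v \<in> set (tl ?p)" "v \<in> reached (litv j b)"
    using reach_along_path[OF distinct_order, of _ ?p] before by metis
  moreover have "v \<notin> range W"
  proof -
    have "v \<in> set ?p" using calculation(1) by (cases ?p) auto
    then show ?thesis by (auto simp: set_clause_path)
  qed
  ultimately show ?thesis by blast
qed

lemma U_before_false_lit:
  assumes i: "i < length cs" "(j, b) \<in> cs ! i"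
    and false: "before s (litv j (\<not> b)) (litv j b)"
    and W: "\<forall>a \<in> {2..7}. before s (litv j b) (W a)"
  shows "before s (U i) (litv j b)"
proof (rule ccontr)
  assume "\<not> before s (U i) (litv j b)"
  then have "before s (litv j b) (U i)" using before_total_lit_U[OF i] by blast
  then obtain v where "v \<in> reached (litv j b)" "v \<notin> range W"
    using reach_rev_clause_path[OF i] by blast
  moreover have "reached (litv j b) \<subseteq> range W"
    using lit_reaches_W[OF var_less[OF i] false W] litv_in_Gverts[OF var_less[OF i]]
    by (intro reached_subset_range_W[of _ "{2..7}"]) auto
  ultimately show False by blast
qed

text \<open>Otherwise u_i reaches its 4 (for a 2-clause: 5) w-neighbours and a vertex on the path
  to each of its 3 (resp. 2) literals.\<close>
lemma clause_lit_before_U: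
  assumes i: "i < length cs" and W: "\<forall>a \<in> {1..7}. before s (U i) (W a)"
  shows "\<exists>(j, b) \<in> cs ! i. before s (litv j b) (U i)"
proof (rule ccontr)
  define c where "c = cs ! i"
  assume none: "\<not> ?thesis"
  have "\<exists>k. k \<in> {1..r} \<and> pathv r i (fst l) (snd l) k \<in> reached (U i)" if "l \<in> c" for l
  proof -
    have l: "(fst l, snd l) \<in> cs ! i" using that unfolding c_def by simp
    then have "before s (U i) (litv (fst l) (snd l))"
      using before_total_lit_U[OF i l] none by blast
    then show ?thesis using reach_clause_path[OF i l] by blast
  qed
  then obtain f where f: "\<forall>l \<in> c. f l \<in> {1..r} \<and> pathv r i (fst l) (snd l) (f l) \<in> reached (U i)"
    by metis
  define P where "P l = pathv r i (fst l) (snd l) (f l)" for l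
  have "inj_on P c"
  proof (rule inj_onI)
    fix l l' assume "l \<in> c" "l' \<in> c" "P l = P l'"
    then have "(fst l, snd l) = (fst l', snd l')"
      using f pathv_eq_imp_lit_eq unfolding P_def by blast
    then show "l = l'" by simp
  qed
  then have card_P: "card (P ` c) = card c" by (rule card_image)
  define A where "A = {1..(if card c = 2 then 5 else 4 :: nat)}"
  have "W ` A \<subseteq> reached (U i)"
  proof clarify
    fix a assume "a \<in> A"
    then have "a \<in> {1..4} \<or> a = 5 \<and> card c = 2" unfolding A_def by (auto split: if_splits)
    then have "a \<in> {1..7}" "(U i, W a) \<in> Gedges r n cs"
      using UW_in_Gedges[OF i] UW5_in_Gedges[OF i] unfolding c_def by auto
    then show "W a \<in> reached (U i)" using W reach_if_edge[OF distinct_order r_ge_1] by blast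
  qed
  moreover have "P ` c \<subseteq> reached (U i)" using f unfolding P_def by auto
  moreover have "W ` A \<inter> P ` c = {}" unfolding P_def by auto
  ultimately have "card (W ` A \<union> P ` c) = card (W ` A) + card (P ` c)"
    using finite_subset[OF _ finite_reach] by (intro card_Un_disjoint) auto
  also have "\<dots> = 7"
    using two_clause_3sat_card[OF formula i] card_P
    by (simp add: card_image inj_on_def A_def c_def)
  finally have "7 = card (W ` A \<union> P ` c)" ..
  also have "\<dots> \<le> card (reached (U i))"
    using \<open>W ` A \<subseteq> reached (U i)\<close> \<open>P ` c \<subseteq> reached (U i)\<close> by (intro card_mono finite_reach) auto
  finally show False using card_reach_le_6 U_in_Gverts[OF i] by fastforce
qed

lemma U_before_first_W:
  assumes i: "i < length cs" and unsat: "\<forall>(j, b) \<in> cs ! i. before s (litv j (\<not> b)) (litv j b)"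
    and k: "first_W k"
  shows "before s (U i) (W k)"
proof (cases "k = 1")
  case True
  have "(W 1, U i) \<in> Gedges r n cs" using UW_in_Gedges[OF i] sym_Gedges by (simp add: symD)
  then have "before s (last [W k, U i]) (W k)"
    using True r_ge_1 U_in_Gverts[OF i] W_in_Gverts[of 1]
    by (intro before_first_W[OF k]) (auto simp: is_path_Cons_Cons is_path_singleton)
  then show ?thesis by simp
next
  case False
  then have b0: "k \<in> lit_W_nbrs (k \<le> 4)" using k unfolding first_W_def lit_W_nbrs_def by auto
  have "cs ! i \<noteq> {}" using two_clause_3sat_card[OF formula i] by auto
  then obtain j b where jb: "(j, b) \<in> cs ! i" by auto
  have lit_W: "before s (litv j b) (W k)" using lits_before_first_W[OF k b0 var_less[OF i jb]] .
  have "before s (U i) (litv j b)"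
    using U_before_false_lit[OF i jb] unsat jb before_first_W_imp_before_W[OF k lit_W] by auto
  then show ?thesis using before_trans[OF distinct_order _ lit_W] by blast
qed

lemma satisfies_order_assignment: "satisfies (\<lambda>j. before s (V j) (V' j)) cs"
  unfolding satisfies_def
proof
  fix c assume "c \<in> set cs"
  then obtain i where i: "i < length cs" "c = cs ! i" by (auto simp: in_set_conv_nth)
  show "\<exists>(j, b) \<in> c. before s (V j) (V' j) = b"
  proof (rule ccontr)
    assume none: "\<not> ?thesis"
    have unsat: "\<forall>(j, b) \<in> cs ! i. before s (litv j (\<not> b)) (litv j b)"
    proof clarify
      fix j b assume jb: "(j, b) \<in> cs ! i"
      then have "before s (V j) (V' j) \<noteq> b" using none i(2) by blast
      then show "before s (litv j (\<not> b)) (litv j b)" using before_false_lit var_less[OF i(1) jb] by blast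
    qed
    obtain k where k: "first_W k" using ex_first_W ..
    have U_W: "\<forall>a \<in> {1..7}. before s (U i) (W a)"
      using before_first_W_imp_before_W[OF k U_before_first_W[OF i(1) unsat k]] by blast
    then obtain j b where jb: "(j, b) \<in> cs ! i" "before s (litv j b) (U i)"
      using clause_lit_before_U[OF i(1)] by blast
    then have "\<forall>a \<in> {2..7}. before s (litv j b) (W a)"
      using U_W before_trans[OF distinct_order jb(2)] by auto
    moreover have "before s (litv j (\<not> b)) (litv j b)" using unsat jb(1) by blast
    ultimately have "before s (U i) (litv j b)" using U_before_false_lit[OF i(1) jb(1)] by blast
    then show False using jb(2) before_asym[OF distinct_order] by blast
  qed
qed

end

theorem lemma3p15:
  fixes r n :: nat and cs :: "clause list"
  assumes "r \<ge> 2"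
    and "two_clause_3sat n cs"
    and "col r (Gverts r n cs) (Gedges r n cs) \<le> 6"
  shows "satisfiable cs"
proof -
  obtain s where "is_order (Gverts r n cs) s"
    "\<forall>u \<in> Gverts r n cs. card (reach r (Gedges r n cs) s u) \<le> 6"
    using ex_order_if_col_le[OF finite_Gverts[OF assms(2)] assms(3)] by blast
  then interpret small_reach_order r n cs s
    using assms(1,2) by unfold_locales
  show ?thesis unfolding satisfiable_def using satisfies_order_assignment by blast
qed

end
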